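(* For every $n \ge 1$, the $\mathbb{Z}$-discriminating complexity of $\mathbb{Z}^n$ asymptotically dominates a polynomial of degree $n-1$, i.e. $(R \mapsto R^{n-1}) \preceq C_{\mathbb{Z}^n}^{\mathbb{Z}}$.
   Context: A homomorphism $\phi: G \to H$ discriminates a finite set $S\subseteq G-\{1\}$ if $1\notin\phi(S)$. For finite generating sets $X$ of $G$, $Y$ of $H$, $|\phi|_X^Y := \max_{x\in X}|\phi(x)|_Y$, and $C_{G,X}^{H,Y}(R) := \min\{|\phi|_X^Y : \phi \text{ discriminates } B_R(G,X)-\{1\}\}$, with $B_R(G,X)$ the closed word-metric ball of radius $R$. For $f,g:\mathbb{N}\to\mathbb{N}$, $f\preceq g$ means there is $K$ with $f(R)\le Kg(KR)+K$ for all $R$; the $\preceq$-class of $C_{G,X}^{H,Y}$ is independent of $X,Y$ and denoted $C_G^H$. *)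

theory Defs
  imports "HOL-Analysis.Finite_Cartesian_Product"
begin

definition word_len :: "'a::ab_group_add set \<Rightarrow> 'a \<Rightarrow> nat" where
  "word_len X g = (LEAST k. \<exists>xs. length xs = k \<and> set xs \<subseteq> X \<union> uminus ` X \<and> sum_list xs = g)"

definition word_ball :: "'a::ab_group_add set \<Rightarrow> nat \<Rightarrow> 'a set" where
  "word_ball X R = {g. word_len X g \<le> R}"

definition is_hom :: "('a::ab_group_add \<Rightarrow> 'b::ab_group_add) \<Rightarrow> bool" where
  "is_hom \<phi> \<longleftrightarrow> (\<forall>x y. \<phi> (x + y) = \<phi> x + \<phi> y)"

definition discriminates :: "('a \<Rightarrow> 'b::zero) \<Rightarrow> 'a set \<Rightarrow> bool" where
  "discriminates \<phi> S \<longleftrightarrow> 0 \<notin> \<phi> ` S"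

definition hom_size :: "'a::ab_group_add set \<Rightarrow> 'b::ab_group_add set \<Rightarrow> ('a \<Rightarrow> 'b) \<Rightarrow> nat" where
  "hom_size X Y \<phi> = Max ((\<lambda>x. word_len Y (\<phi> x)) ` X)"

definition disc_complexity ::
  "'a::ab_group_add set \<Rightarrow> 'b::ab_group_add set \<Rightarrow> nat \<Rightarrow> nat" where
  "disc_complexity X Y R = (LEAST c. \<exists>\<phi>::'a \<Rightarrow> 'b. is_hom \<phi> \<and>
       discriminates \<phi> (word_ball X R - {0}) \<and> hom_size X Y \<phi> = c)"

definition preceq :: "(nat \<Rightarrow> nat) \<Rightarrow> (nat \<Rightarrow> nat) \<Rightarrow> bool" (infix "\<preceq>" 50) where
  "f \<preceq> g \<longleftrightarrow> (\<exists>K. \<forall>R. f R \<le> K * g (K * R) + K)"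

definition std_basis :: "(int ^ 'n) set" where
  "std_basis = (\<lambda>i. \<chi> j. if j = i then 1 else 0) ` UNIV"

end

theory Submission
  imports Defs
begin

text \<open>Let \<open>N\<close> be the rank and \<open>\<phi> : \<int>\<^sup>N \<rightarrow> \<int>\<close> a homomorphism discriminating the ball of
  radius \<open>N m\<close>. Differences of points of the box \<open>{0..m}\<^sup>N\<close> lie in that ball, so \<open>\<phi>\<close> is
  injective on the box. If every generator is mapped to an integer of absolute value at most
  \<open>M\<close>, the image of the box lies in \<open>[-NmM, NmM]\<close>, whence \<open>(m+1)\<^sup>N \<le> 2NmM + 1\<close> and
  \<open>m\<^sup>N\<^sup>-\<^sup>1 \<le> 2NM\<close>. A discriminating homomorphism exists for every radius (write the
  coordinates as digits in a large enough base), so the complexity is attained and bounded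
  below as claimed.\<close>

lemma is_hom_iff_additive: "is_hom \<phi> \<longleftrightarrow> additive \<phi>"
  by (simp add: is_hom_def additive_def)

lemma (in additive) sum_list: "f (sum_list xs) = sum_list (map f xs)"
  by (induction xs) (simp_all add: zero add)

lemma abs_sum_list_le:
  fixes xs :: "int list"
  assumes "\<And>x. x \<in> set xs \<Longrightarrow> \<bar>x\<bar> \<le> M"
  shows "\<bar>sum_list xs\<bar> \<le> M * int (length xs)"
  using assms
proof (induction xs)
  case (Cons a xs)
  then have "\<bar>a\<bar> \<le> M" "\<bar>sum_list xs\<bar> \<le> M * int (length xs)"
    by auto
  then show ?case
    using abs_triangle_ineq[of a "sum_list xs"] by (simp add: algebra_simps)
qed simp

lemma word_len_le_length:
  assumes "set xs \<subseteq> X \<union> uminus ` X" "sum_list xs = g"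
  shows "word_len X g \<le> length xs"
  unfolding word_len_def using assms by (intro Least_le) blast

lemma obtain_shortest_word:
  assumes "set xs \<subseteq> X \<union> uminus ` X" "sum_list xs = g"
  obtains ys where "length ys = word_len X g" "set ys \<subseteq> X \<union> uminus ` X" "sum_list ys = g"
proof -
  have "\<exists>ys. length ys = word_len X g \<and> set ys \<subseteq> X \<union> uminus ` X \<and> sum_list ys = g"
    unfolding word_len_def by (rule LeastI[of _ "length xs"]) (use assms in blast)
  then show thesis using that by blast
qed

text \<open>The word \<open>xs\<close> only certifies that \<open>g\<close> lies in the subgroup generated by \<open>X\<close>:
  outside it \<^const>\<open>word_len\<close> is the junk value of \<open>LEAST\<close> over an empty set.\<close>
lemma additive_abs_le_word_len:
  fixes f :: "'a::ab_group_add \<Rightarrow> int"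
  assumes f: "additive f" and bound: "\<And>x. x \<in> X \<Longrightarrow> \<bar>f x\<bar> \<le> M"
    and "set xs \<subseteq> X \<union> uminus ` X" "sum_list xs = g"
  shows "\<bar>f g\<bar> \<le> M * int (word_len X g)"
proof -
  obtain ys where ys: "length ys = word_len X g" "set ys \<subseteq> X \<union> uminus ` X" "sum_list ys = g"
    using obtain_shortest_word assms(3,4) by blast
  have "\<bar>y\<bar> \<le> M" if "y \<in> set (map f ys)" for y
    using that ys(2) bound by (auto simp: additive.minus[OF f])
  then have "\<bar>sum_list (map f ys)\<bar> \<le> M * int (length ys)"
    using abs_sum_list_le by fastforce
  moreover have "f g = sum_list (map f ys)"
    using additive.sum_list[OF f, of ys] ys(3) by simp
  ultimately show ?thesis
    using ys(1) by simp
qed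

lemma abs_le_word_len_one: "\<bar>a\<bar> \<le> int (word_len {1::int} a)"
proof -
  have "set (replicate (nat \<bar>a\<bar>) (sgn a)) \<subseteq> {1} \<union> uminus ` {1}"
    by (auto simp: sgn_if)
  moreover have "sum_list (replicate (nat \<bar>a\<bar>) (sgn a)) = a"
    by (simp add: sum_list_replicate abs_mult_sgn)
  ultimately show ?thesis
    using additive_abs_le_word_len[of id "{1}" 1] by (simp add: additive_def)
qed

definition unit_vec :: "'n \<Rightarrow> int ^ 'n" where
  "unit_vec i = (\<chi> j. if j = i then 1 else 0)"

definition l1_norm :: "int ^ 'n \<Rightarrow> nat" where
  "l1_norm v = (\<Sum>j\<in>UNIV. nat \<bar>v $ j\<bar>)"

lemma std_basis_eq_range_unit_vec: "std_basis = range unit_vec"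
  by (simp add: std_basis_def unit_vec_def)

lemma finite_std_basis: "finite (std_basis :: (int ^ 'n) set)"
  by (simp add: std_basis_eq_range_unit_vec)

lemma l1_norm_diff_signed_unit_vec:
  fixes v :: "int ^ 'n"
  assumes "v \<noteq> 0"
  obtains w where "w \<in> std_basis \<union> uminus ` std_basis" "l1_norm (v - w) + 1 = l1_norm v"
proof -
  obtain i where i: "v $ i \<noteq> 0"
    using assms by (auto simp: vec_eq_iff)
  define w :: "int ^ 'n" where "w = (\<chi> j. if j = i then sgn (v $ i) else 0)"
  have "w = unit_vec i \<or> w = - unit_vec i"
    using i by (auto simp: w_def unit_vec_def vec_eq_iff sgn_if)
  then have "w \<in> std_basis \<union> uminus ` std_basis"
    by (auto simp: std_basis_eq_range_unit_vec)
  moreover have "nat \<bar>(v - w) $ j\<bar> + (if j = i then 1 else 0) = nat \<bar>v $ j\<bar>" for j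
    using i by (auto simp: w_def sgn_if)
  then have "(\<Sum>j\<in>UNIV. nat \<bar>(v - w) $ j\<bar> + (if j = i then 1 else 0)) = l1_norm v"
    by (simp add: l1_norm_def)
  then have "l1_norm (v - w) + 1 = l1_norm v"
    by (simp add: l1_norm_def sum.distrib)
  ultimately show thesis
    using that by blast
qed

lemma std_basis_word_of_l1_norm:
  fixes v :: "int ^ 'n"
  obtains xs where "length xs = l1_norm v" "set xs \<subseteq> std_basis \<union> uminus ` std_basis"
    "sum_list xs = v"
proof (induction "l1_norm v" arbitrary: v thesis)
  case 0
  then have "v = 0"
    by (auto simp: l1_norm_def vec_eq_iff)
  then show ?case
    using "0.prems"[of "[]"] "0.hyps" by simp
next
  case (Suc n)
  then have "v \<noteq> 0"
    by (auto simp: l1_norm_def)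
  then obtain w where w: "w \<in> std_basis \<union> uminus ` std_basis" "l1_norm (v - w) + 1 = l1_norm v"
    by (rule l1_norm_diff_signed_unit_vec)
  moreover have "n = l1_norm (v - w)"
    using w(2) Suc.hyps(2) by simp
  ultimately obtain xs where "length xs = n" "set xs \<subseteq> std_basis \<union> uminus ` std_basis"
    "sum_list xs = v - w"
    using Suc.hyps(1) by metis
  then show ?case
    using Suc.prems[of "w # xs"] w Suc.hyps(2) by simp
qed

lemma word_len_std_basis_le_l1_norm: "word_len std_basis v \<le> l1_norm (v :: int ^ 'n)"
proof -
  obtain xs where "length xs = l1_norm v" "set xs \<subseteq> std_basis \<union> uminus ` std_basis"
    "sum_list xs = v"
    by (rule std_basis_word_of_l1_norm)
  then show ?thesis
    using word_len_le_length by metis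
qed

lemma abs_component_le_word_len: "\<bar>v $ j\<bar> \<le> int (word_len std_basis (v :: int ^ 'n))"
proof -
  have "additive (\<lambda>v :: int ^ 'n. v $ j)"
    by (simp add: additive_def)
  moreover have "\<bar>x $ j\<bar> \<le> 1" if "x \<in> std_basis" for x :: "int ^ 'n"
    using that by (auto simp: std_basis_eq_range_unit_vec unit_vec_def)
  moreover obtain xs where "set xs \<subseteq> std_basis \<union> uminus ` std_basis" "sum_list xs = v"
    by (rule std_basis_word_of_l1_norm)
  ultimately show ?thesis
    using additive_abs_le_word_len[of "\<lambda>v. v $ j" std_basis 1 xs v] by simp
qed

lemma word_len_le_hom_size:
  "finite X \<Longrightarrow> x \<in> X \<Longrightarrow> word_len Y (\<phi> x) \<le> hom_size X Y \<phi>"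
  unfolding hom_size_def by (rule Max_ge) auto

definition box :: "nat \<Rightarrow> (int ^ 'n) set" where
  "box m = {v. \<forall>i. v $ i \<in> {0..int m}}"

lemma card_box: "card (box m :: (int ^ 'n) set) = (m + 1) ^ CARD('n)"
proof -
  have "vec_nth ` box m = (\<Pi>\<^sub>E i \<in> (UNIV :: 'n set). {0..int m})"
  proof
    show "(\<Pi>\<^sub>E i \<in> (UNIV :: 'n set). {0..int m}) \<subseteq> vec_nth ` box m"
    proof
      fix f assume "f \<in> (\<Pi>\<^sub>E i \<in> (UNIV :: 'n set). {0..int m})"
      then have "vec_lambda f \<in> box m"
        by (simp add: box_def PiE_iff)
      then show "f \<in> vec_nth ` box m"
        by (rule rev_image_eqI) (simp add: vec_lambda_inverse)
    qed
  qed (auto simp: box_def)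
  moreover have "inj_on vec_nth (box m :: (int ^ 'n) set)"
    by (simp add: inj_on_def vec_eq_iff)
  ultimately have "card (box m :: (int ^ 'n) set) = card (\<Pi>\<^sub>E i \<in> (UNIV :: 'n set). {0..int m})"
    using card_image by metis
  then show ?thesis
    by (simp add: card_PiE nat_add_distrib)
qed

lemma l1_norm_diff_box:
  fixes v w :: "int ^ 'n"
  assumes "v \<in> box m" "w \<in> box m"
  shows "l1_norm (v - w) \<le> CARD('n) * m"
proof -
  have "nat \<bar>(v - w) $ j\<bar> \<le> m" for j
  proof -
    have "0 \<le> v $ j" "v $ j \<le> int m" "0 \<le> w $ j" "w $ j \<le> int m"
      using assms by (auto simp: box_def)
    then show ?thesis
      by (simp add: nat_le_iff abs_le_iff)
  qed
  then have "l1_norm (v - w) \<le> (\<Sum>j\<in>(UNIV :: 'n set). m)"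
    unfolding l1_norm_def by (rule sum_mono)
  then show ?thesis
    by simp
qed

lemma card_box_le_if_discriminates:
  fixes \<phi> :: "int ^ 'n \<Rightarrow> int"
  assumes \<phi>: "additive \<phi>"
    and disc: "discriminates \<phi> (word_ball std_basis (CARD('n) * m) - {0})"
    and bound: "\<And>x. x \<in> std_basis \<Longrightarrow> \<bar>\<phi> x\<bar> \<le> int M"
  shows "(m + 1) ^ CARD('n) \<le> 2 * CARD('n) * m * M + 1"
proof -
  let ?r = "CARD('n) * m * M"
  have "inj_on \<phi> (box m)"
  proof (rule inj_onI, rule ccontr)
    fix v w assume vw: "v \<in> box m" "w \<in> box m" "\<phi> v = \<phi> w" "v \<noteq> w"
    then have "v - w \<in> word_ball std_basis (CARD('n) * m) - {0}"
      using word_len_std_basis_le_l1_norm[of "v - w"] l1_norm_diff_box[of v m w]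
      by (simp add: word_ball_def)
    moreover have "\<phi> (v - w) = 0"
      using vw(3) by (simp add: additive.diff[OF \<phi>])
    ultimately show False
      using disc by (force simp: discriminates_def)
  qed
  moreover have "\<phi> ` box m \<subseteq> {- int ?r..int ?r}"
  proof clarify
    fix v :: "int ^ 'n" assume v: "v \<in> box m"
    obtain xs where "set xs \<subseteq> std_basis \<union> uminus ` std_basis" "sum_list xs = v"
      by (rule std_basis_word_of_l1_norm)
    then have "\<bar>\<phi> v\<bar> \<le> int M * int (word_len std_basis v)"
      using additive_abs_le_word_len[OF \<phi> bound] by blast
    also have "\<dots> \<le> int M * int (CARD('n) * m)"
    proof -
      have "(0 :: int ^ 'n) \<in> box m"
        by (simp add: box_def)
      then have "word_len std_basis v \<le> CARD('n) * m"
        using word_len_std_basis_le_l1_norm[of v] l1_norm_diff_box[OF v] by fastforce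
      then show ?thesis
        by (intro mult_left_mono) (simp_all flip: of_nat_mult)
    qed
    finally show "\<phi> v \<in> {- int ?r..int ?r}"
      by (simp add: abs_le_iff algebra_simps)
  qed
  ultimately have "card (box m :: (int ^ 'n) set) \<le> card {- int ?r..int ?r}"
    by (intro card_inj_on_le) auto
  also have "\<dots> = 2 * ?r + 1"
    using card_atLeastAtMost_int[of "- int ?r" "int ?r"] by (simp only: nat_int_add)
  finally show ?thesis
    by (simp add: card_box algebra_simps)
qed

lemma signed_digits_eq_0:
  fixes u :: "nat \<Rightarrow> int"
  assumes "\<And>k. k < n \<Longrightarrow> \<bar>u k\<bar> < B" and "(\<Sum>k<n. u k * B ^ k) = 0" and "k < n"
  shows "u k = 0"
  using assms
proof (induction n arbitrary: u k)
  case 0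
  then show ?case by simp
next
  case (Suc n)
  define T where "T = (\<Sum>k<n. u (Suc k) * B ^ k)"
  have "(\<Sum>k<Suc n. u k * B ^ k) = u 0 + B * T"
    unfolding T_def sum.lessThan_Suc_shift by (simp add: sum_distrib_left ac_simps)
  then have "u 0 + B * T = 0"
    using Suc.prems(2) by simp
  moreover have "\<bar>u 0\<bar> < B"
    using Suc.prems(1) by simp
  moreover have "B dvd u 0"
    using \<open>u 0 + B * T = 0\<close> by (metis add_eq_0_iff dvd_minus_iff dvd_triv_left)
  ultimately have "u 0 = 0"
    using dvd_imp_le_int[of "u 0" B] by (cases "u 0 = 0") auto
  with \<open>u 0 + B * T = 0\<close> \<open>\<bar>u 0\<bar> < B\<close> have "T = 0"
    by simp
  have "u (Suc k') = 0" if "k' < n" for k'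
    using Suc.IH[of "\<lambda>k. u (Suc k)" k'] Suc.prems(1) \<open>T = 0\<close> that unfolding T_def by simp
  with \<open>u 0 = 0\<close> show ?case
    using Suc.prems(3) by (cases k) auto
qed

lemma exists_discriminating_hom:
  "\<exists>\<phi> :: int ^ 'n \<Rightarrow> int. is_hom \<phi> \<and> discriminates \<phi> (word_ball std_basis R - {0})"
proof -
  obtain e :: "'n \<Rightarrow> nat" where e: "bij_betw e UNIV {..<CARD('n)}"
    using ex_bij_betw_finite_nat[of "UNIV :: 'n set"] by (auto simp: atLeast0LessThan)
  define d where "d = inv_into UNIV e"
  have d: "bij_betw d {..<CARD('n)} UNIV" "\<And>k. k < CARD('n) \<Longrightarrow> e (d k) = k"
    unfolding d_def using bij_betw_inv_into[OF e] bij_betw_inv_into_right[OF e] by auto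
  define B :: int where "B = int R + 1"
  define \<phi> where "\<phi> v = (\<Sum>i\<in>UNIV. v $ i * B ^ e i)" for v :: "int ^ 'n"
  have "additive \<phi>"
    by (simp add: additive_def \<phi>_def sum.distrib distrib_right)
  moreover have "v = 0" if v: "v \<in> word_ball std_basis R" "\<phi> v = 0" for v
  proof -
    have "\<phi> v = (\<Sum>k<CARD('n). v $ d k * B ^ k)"
      unfolding \<phi>_def sum.reindex_bij_betw[OF d(1), symmetric] by (simp add: d(2))
    then have digits_sum: "(\<Sum>k<CARD('n). v $ d k * B ^ k) = 0"
      using v(2) by simp
    have digits_small: "\<bar>v $ d k\<bar> < B" if "k < CARD('n)" for k
      using abs_component_le_word_len[of v "d k"] v(1) by (simp add: word_ball_def B_def)
    have "v $ i = 0" for i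
    proof -
      obtain k where "k < CARD('n)" "i = d k"
        using bij_betw_imp_surj_on[OF d(1)] by blast
      then show ?thesis
        using signed_digits_eq_0[OF digits_small digits_sum] by blast
    qed
    then show ?thesis
      by (simp add: vec_eq_iff)
  qed
  then have "discriminates \<phi> (word_ball std_basis R - {0})"
    by (auto simp: discriminates_def)
  ultimately show ?thesis
    by (auto simp: is_hom_iff_additive)
qed

lemma disc_complexity_attained:
  fixes X :: "'a::ab_group_add set" and Y :: "'b::ab_group_add set"
  assumes "\<exists>\<phi> :: 'a \<Rightarrow> 'b. is_hom \<phi> \<and> discriminates \<phi> (word_ball X R - {0})"
  obtains \<phi> :: "'a \<Rightarrow> 'b" where "is_hom \<phi>" "discriminates \<phi> (word_ball X R - {0})"
    "hom_size X Y \<phi> = disc_complexity X Y R"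
proof -
  have "\<exists>\<phi> :: 'a \<Rightarrow> 'b. is_hom \<phi> \<and> discriminates \<phi> (word_ball X R - {0}) \<and>
          hom_size X Y \<phi> = disc_complexity X Y R"
    unfolding disc_complexity_def by (rule LeastI_ex) (use assms in blast)
  then show thesis
    using that by blast
qed

lemma power_le_disc_complexity:
  assumes "m \<ge> 1"
  shows "m ^ (CARD('n) - 1) \<le>
    2 * CARD('n) * disc_complexity (std_basis :: (int ^ 'n) set) ({1} :: int set) (CARD('n) * m)"
proof -
  let ?N = "CARD('n)"
  let ?C = "disc_complexity (std_basis :: (int ^ 'n) set) ({1} :: int set) (?N * m)"
  obtain \<phi> :: "int ^ 'n \<Rightarrow> int"
    where \<phi>: "additive \<phi>" "discriminates \<phi> (word_ball std_basis (?N * m) - {0})"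
      and size: "hom_size std_basis {1} \<phi> = ?C"
    using disc_complexity_attained[where Y = "{1 :: int}", OF exists_discriminating_hom]
    by (metis is_hom_iff_additive)
  have "\<bar>\<phi> x\<bar> \<le> int ?C" if "x \<in> std_basis" for x
    using abs_le_word_len_one[of "\<phi> x"] word_len_le_hom_size[OF finite_std_basis that, of "{1}" \<phi>] size
    by linarith
  then have "(m + 1) ^ ?N \<le> 2 * ?N * m * ?C + 1"
    by (rule card_box_le_if_discriminates[OF \<phi>])
  moreover have "m ^ ?N < (m + 1) ^ ?N"
    by (rule power_strict_mono) auto
  ultimately have "m ^ ?N \<le> m * (2 * ?N * ?C)"
    by (simp add: ac_simps)
  moreover have "m ^ ?N = m * m ^ (?N - 1)"
    by (simp flip: power_Suc)
  ultimately show ?thesis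
    using assms by simp
qed

theorem mainTheorem9:
  shows "(\<lambda>R. R ^ (CARD('n::finite) - 1)) \<preceq>
           disc_complexity (std_basis :: (int ^ 'n) set) ({1} :: int set)"
  unfolding preceq_def
proof (intro exI allI)
  fix R :: nat
  let ?K = "2 * CARD('n)"
  let ?C = "disc_complexity (std_basis :: (int ^ 'n) set) ({1} :: int set)"
  show "R ^ (CARD('n) - 1) \<le> ?K * ?C (?K * R) + ?K"
  proof (cases "R = 0")
    case True
    then have "R ^ (CARD('n) - 1) \<le> 1"
      by (simp add: power_0_left)
    moreover have "1 \<le> ?K"
      by (simp add: Suc_leI)
    ultimately show ?thesis
      by linarith
  next
    case False
    have "R ^ (CARD('n) - 1) \<le> (2 * R) ^ (CARD('n) - 1)"
      by (intro power_mono) auto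
    also have "\<dots> \<le> ?K * ?C (CARD('n) * (2 * R))"
      by (rule power_le_disc_complexity) (use False in simp)
    finally show ?thesis
      by (simp add: ac_simps)
  qed
qed

end
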